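(* Let $p \geq 6$ and $q \geq 3$ be integers and let $L$ be the Laplacian of the graph $K_p \oplus C_q$. Let $E_K$ be the span of the vectors $e_{-1}-e_{-k}$, $k=2,\ldots,p-1$ (equivalently, the vectors supported on $\{-p+1,\ldots,-1\}$ whose entries sum to $0$), and $E_K^\perp$ its orthogonal complement. For $\lambda > 4$ set $\sigma_+(\lambda) = \tfrac12[(2-\lambda) + \sqrt{(2-\lambda)^2-4}]$ and $$F_q(\lambda) = (1-\lambda)\,\sigma_+\,\frac{1+\sigma_+^{2q-3}}{1+\sigma_+^{2q-1}} - (p-\lambda)(1-\lambda) + (p-1), \quad \sigma_+ = \sigma_+(\lambda).$$ Then $\lambda > 4$ is an eigenvalue of $L$ with a corresponding eigenvector $v \in E_K^\perp$ if and only if $F_q(\lambda) = 0$. Furthermore, $F_q(\lambda) = 0$ has exactly one solution in $(p,p+2]$ and no solutions in $(4,p] \cup (p+2,+\infty)$.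
   Context: For integers $p \geq 3$, $q \geq 2$, the graph $K_p \oplus C_q$ has vertex set $\{-p+1,\ldots,0\} \cup \{1,\ldots,q-1\}$. Its edges are: every pair of distinct vertices in $\{-p+1,\ldots,0\}$, the edge $\{0,1\}$, and the edges $\{j,j+1\}$ for $1 \leq j \leq q-2$. The Laplacian $L$ is the matrix with $L_{ii}$ equal to the degree of vertex $i$, $L_{ij}=-1$ if $i\neq j$ are adjacent and $0$ otherwise. Vectors are real functions on the vertex set with the standard inner product; $e_j$ is the indicator vector of vertex $j$. *)

theory Defs
  imports Complex_Main
begin

text \<open>The graph K_p (+) C_q on the vertex set {-p+1,...,0} union {1,...,q-1} (integers).
  Vectors are real functions on the integers vanishing outside the vertex set.\<close>

definition verts :: "nat \<Rightarrow> nat \<Rightarrow> int set" where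
  "verts p q = {-(int p) + 1 .. int q - 1}"

definition adj :: "nat \<Rightarrow> nat \<Rightarrow> int \<Rightarrow> int \<Rightarrow> bool" where
  "adj p q i j \<longleftrightarrow> i \<in> verts p q \<and> j \<in> verts p q \<and> i \<noteq> j \<and>
     ((i \<le> 0 \<and> j \<le> 0) \<or> {i, j} = {0, 1} \<or> (i \<ge> 1 \<and> j \<ge> 1 \<and> \<bar>i - j\<bar> = 1))"

definition degree :: "nat \<Rightarrow> nat \<Rightarrow> int \<Rightarrow> nat" where
  "degree p q i = card {j \<in> verts p q. adj p q i j}"

definition lap :: "nat \<Rightarrow> nat \<Rightarrow> int \<Rightarrow> int \<Rightarrow> real" where
  "lap p q i j = (if i = j then real (degree p q i) else if adj p q i j then -1 else 0)"

definition vecs :: "nat \<Rightarrow> nat \<Rightarrow> (int \<Rightarrow> real) set" where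
  "vecs p q = {v. \<forall>i. i \<notin> verts p q \<longrightarrow> v i = 0}"

definition lap_apply :: "nat \<Rightarrow> nat \<Rightarrow> (int \<Rightarrow> real) \<Rightarrow> int \<Rightarrow> real" where
  "lap_apply p q v i = (if i \<in> verts p q then (\<Sum>j\<in>verts p q. lap p q i j * v j) else 0)"

definition inner_v :: "nat \<Rightarrow> nat \<Rightarrow> (int \<Rightarrow> real) \<Rightarrow> (int \<Rightarrow> real) \<Rightarrow> real" where
  "inner_v p q u v = (\<Sum>i\<in>verts p q. u i * v i)"

definition ind :: "int \<Rightarrow> int \<Rightarrow> real" where
  "ind j = (\<lambda>i. if i = j then 1 else 0)"

definition EK :: "nat \<Rightarrow> (int \<Rightarrow> real) set" where
  "EK p = {w. \<exists>c :: nat \<Rightarrow> real. w = (\<lambda>i. \<Sum>k\<in>{2..p-1}. c k * (ind (-1) i - ind (-(int k)) i))}"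

definition EK_perp :: "nat \<Rightarrow> nat \<Rightarrow> (int \<Rightarrow> real) set" where
  "EK_perp p q = {v \<in> vecs p q. \<forall>w\<in>EK p. inner_v p q w v = 0}"

definition sigma_plus :: "real \<Rightarrow> real" where
  "sigma_plus lam = ((2 - lam) + sqrt ((2 - lam)^2 - 4)) / 2"

definition Fq :: "nat \<Rightarrow> nat \<Rightarrow> real \<Rightarrow> real" where
  "Fq p q lam = (let s = sigma_plus lam in
     (1 - lam) * s * (1 + s ^ (2*q - 3)) / (1 + s ^ (2*q - 1))
     - (real p - lam) * (1 - lam) + (real p - 1))"

end

theory Submission
  imports Defs
begin

text \<open>A vector of \<open>E_K\<^sup>\<bottom>\<close> is constant, say \<open>a\<close>, on the clique vertices \<open>-p+1, ..., -1\<close>.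
  For such a vector the eigenvalue equation \<open>L v = \<lambda> v\<close> says: \<open>v 0 = (1 - \<lambda>) a\<close> and
  \<open>v 1 = ((p - \<lambda>)(1 - \<lambda>) - (p - 1)) a\<close> at the clique, the recurrence
  \<open>v (j-1) + v (j+1) = (2 - \<lambda>) v j\<close> along the path and \<open>v (q-2) = (1 - \<lambda>) v (q-1)\<close> at its end.
  For \<open>\<lambda> > 4\<close> the number \<open>\<sigma> = \<sigma>\<^sub>+(\<lambda>)\<close> is a root of \<open>\<sigma>\<^sup>2 + 1 = (2 - \<lambda>) \<sigma>\<close> in \<open>(-1, 0)\<close>,
  and \<open>G j = \<sigma>\<^sup>j + \<sigma>\<^bsup>2q-1-j\<^esup>\<close> solves the path recurrence together with the end condition.
  A vanishing Wronskian shows that the path part of any eigenvector is proportional to \<open>G\<close>,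
  so an eigenvector exists iff \<open>v 1 / v 0 = G 1 / G 0\<close>, which is \<open>F\<^sub>q(\<lambda>) = 0\<close>.

  Running the recurrence backwards from the end exhibits \<open>R = G 1 / G 0\<close> as the finite continued
  fraction \<open>1 / ((2 - \<lambda>) - 1 / ((2 - \<lambda>) - ...))\<close>, which lies in \<open>(-1, 0)\<close> and increases with \<open>\<lambda>\<close>.
  Hence \<open>F\<^sub>q(\<lambda>) = (\<lambda> - 1)(p - \<lambda> - R) + p - 1\<close> is positive on \<open>(4, p]\<close>, negative on \<open>[p+2, \<infinity>)\<close>
  and strictly decreasing on \<open>(p, p+2]\<close>; the intermediate value theorem supplies the root.\<close>

section \<open>The Laplacian of \<open>K\<^sub>p \<oplus> C\<^sub>q\<close> on \<open>E\<^sub>K\<^sup>\<bottom>\<close>\<close>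

lemma lap_apply_neighbour_sum:
  assumes "i \<in> verts p q"
  shows "lap_apply p q v i = (\<Sum>j\<in>{j\<in>verts p q. adj p q i j}. v i - v j)"
proof -
  let ?V = "verts p q" let ?N = "{j\<in>verts p q. adj p q i j}"
  have fin: "finite ?V" by (simp add: verts_def)
  have "lap_apply p q v i = lap p q i i * v i + (\<Sum>j\<in>?V-{i}. lap p q i j * v j)"
    using fin assms by (simp add: lap_apply_def sum.remove)
  also have "(\<Sum>j\<in>?V-{i}. lap p q i j * v j) = (\<Sum>j\<in>?V-{i}. if adj p q i j then - v j else 0)"
    by (rule sum.cong) (auto simp: lap_def)
  also have "\<dots> = (\<Sum>j\<in>{j\<in>?V-{i}. adj p q i j}. - v j)"
    by (rule sum.inter_filter[symmetric]) (use fin in simp)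
  also have "{j\<in>?V-{i}. adj p q i j} = ?N" by (auto simp: adj_def)
  finally have "lap_apply p q v i = real (card ?N) * v i - (\<Sum>j\<in>?N. v j)"
    by (simp add: lap_def degree_def sum_negf)
  also have "\<dots> = (\<Sum>j\<in>?N. v i - v j)" using fin by (simp add: sum_subtractf)
  finally show ?thesis .
qed

lemma neighbours_clique:
  assumes "- int p + 1 \<le> i" "i \<le> -1" "q \<ge> 1"
  shows "{j\<in>verts p q. adj p q i j} = {- int p + 1 .. 0} - {i}"
  using assms by (auto simp: adj_def verts_def)

lemma neighbours_zero:
  assumes "q \<ge> 2" "p \<ge> 1"
  shows "{j\<in>verts p q. adj p q 0 j} = insert 1 {- int p + 1 .. -1}"
  using assms by (auto simp: adj_def verts_def doubleton_eq_iff)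

lemma neighbours_path:
  assumes "1 \<le> i" "i \<le> int q - 2" "p \<ge> 1"
  shows "{j\<in>verts p q. adj p q i j} = {i - 1, i + 1}"
  using assms by (auto simp: adj_def verts_def doubleton_eq_iff)

lemma neighbours_last:
  assumes "q \<ge> 3" "p \<ge> 1"
  shows "{j\<in>verts p q. adj p q (int q - 1) j} = {int q - 2}"
  using assms by (auto simp: adj_def verts_def doubleton_eq_iff)

lemma lap_apply_clique_const:
  assumes p: "p \<ge> 3" and q: "q \<ge> 3"
    and const: "\<forall>i. - int p + 1 \<le> i \<and> i \<le> -1 \<longrightarrow> v i = a"
  shows "\<And>i. - int p + 1 \<le> i \<Longrightarrow> i \<le> -1 \<Longrightarrow> lap_apply p q v i = a - v 0"
    and "lap_apply p q v 0 = (real p - 1) * (v 0 - a) + (v 0 - v 1)"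
    and "\<And>i. 1 \<le> i \<Longrightarrow> i \<le> int q - 2 \<Longrightarrow> lap_apply p q v i = 2 * v i - v (i - 1) - v (i + 1)"
    and "lap_apply p q v (int q - 1) = v (int q - 1) - v (int q - 2)"
proof -
  fix i :: int assume i: "- int p + 1 \<le> i" "i \<le> -1"
  have "i \<in> verts p q" using i q by (simp add: verts_def)
  then have "lap_apply p q v i = (\<Sum>j\<in>{- int p + 1 .. 0} - {i}. v i - v j)"
    using lap_apply_neighbour_sum neighbours_clique[OF i] q by simp
  also have "\<dots> = (\<Sum>j\<in>{- int p + 1 .. 0} - {i}. if j = 0 then a - v 0 else 0)"
    by (rule sum.cong) (use const i in auto)
  also have "\<dots> = a - v 0" using i p by simp
  finally show "lap_apply p q v i = a - v 0" .
next
  have "0 \<in> verts p q" using p q by (simp add: verts_def)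
  then have "lap_apply p q v 0 = (v 0 - v 1) + (\<Sum>j\<in>{- int p + 1 .. -1}. v 0 - v j)"
    using lap_apply_neighbour_sum neighbours_zero[of q p] p q by simp
  also have "(\<Sum>j\<in>{- int p + 1 .. -1}. v 0 - v j) = (\<Sum>j\<in>{- int p + 1 .. -1}. v 0 - a)"
    by (rule sum.cong) (use const in simp_all)
  also have "\<dots> = (real p - 1) * (v 0 - a)" using p by simp
  finally show "lap_apply p q v 0 = (real p - 1) * (v 0 - a) + (v 0 - v 1)" by simp
next
  fix i :: int assume i: "1 \<le> i" "i \<le> int q - 2"
  have "i \<in> verts p q" using i p by (simp add: verts_def)
  then show "lap_apply p q v i = 2 * v i - v (i - 1) - v (i + 1)"
    using lap_apply_neighbour_sum neighbours_path[OF i] p by simp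
next
  have "int q - 1 \<in> verts p q" using p q by (simp add: verts_def)
  then show "lap_apply p q v (int q - 1) = v (int q - 1) - v (int q - 2)"
    using lap_apply_neighbour_sum neighbours_last[of q p] p q by simp
qed

lemma eigenvector_iff_vertex_equations:
  assumes p: "p \<ge> 3" and q: "q \<ge> 3" and v: "v \<in> vecs p q"
    and const: "\<forall>i. - int p + 1 \<le> i \<and> i \<le> -1 \<longrightarrow> v i = a"
  shows "lap_apply p q v = (\<lambda>i. lam * v i) \<longleftrightarrow>
     v 0 = (1 - lam) * a \<and>
     v 1 = ((real p - lam) * (1 - lam) - (real p - 1)) * a \<and>
     (\<forall>j. 1 \<le> j \<and> j \<le> q - 2 \<longrightarrow>
        v (int (j - 1)) + v (int (j + 1)) = (2 - lam) * v (int j)) \<and>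
     v (int (q - 2)) = (1 - lam) * v (int (q - 1))"
    (is "?eig \<longleftrightarrow> ?v0 \<and> ?v1 \<and> ?path \<and> ?last")
proof -
  note L = lap_apply_clique_const[OF p q const]
  have clique: "lap_apply p q v i = lam * v i \<longleftrightarrow> ?v0"
    if "- int p + 1 \<le> i" "i \<le> -1" for i
    using L(1)[OF that] const that by (auto simp: algebra_simps)
  have zero: "lap_apply p q v 0 = lam * v 0 \<longleftrightarrow> ?v1" if ?v0
    unfolding L(2) that by (auto simp: algebra_simps)
  have path: "lap_apply p q v (int j) = lam * v (int j) \<longleftrightarrow>
      v (int (j - 1)) + v (int (j + 1)) = (2 - lam) * v (int j)"
    if "1 \<le> j" "j \<le> q - 2" for j
  proof -
    have "1 \<le> int j" "int j \<le> int q - 2" using that by auto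
    then show ?thesis using L(3)[of "int j"] that by (auto simp: algebra_simps)
  qed
  have last: "lap_apply p q v (int q - 1) = lam * v (int q - 1) \<longleftrightarrow> ?last"
    using L(4) q by (auto simp: algebra_simps)
  show ?thesis
  proof
    assume ?eig
    then have eq: "lap_apply p q v i = lam * v i" for i by simp
    have "?v0" using clique[of "-1"] eq p by simp
    moreover have "?path" using path eq by blast
    ultimately show "?v0 \<and> ?v1 \<and> ?path \<and> ?last" using zero last eq by blast
  next
    assume eqs: "?v0 \<and> ?v1 \<and> ?path \<and> ?last"
    show ?eig
    proof
      fix i :: int
      consider "i \<notin> verts p q" | "- int p + 1 \<le> i \<and> i \<le> -1" | "i = 0"
        | "1 \<le> i \<and> i \<le> int q - 2" | "i = int q - 1"
        by (force simp: verts_def)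
      then show "lap_apply p q v i = lam * v i"
      proof cases
        case 1 then show ?thesis using v by (simp add: lap_apply_def vecs_def)
      next
        case 4
        then have "i = int (nat i)" "1 \<le> nat i" "nat i \<le> q - 2" by auto
        then show ?thesis using path[of "nat i"] eqs by metis
      qed (use clique zero last eqs in auto)
    qed
  qed
qed

lemma inner_v_ind_diff:
  assumes "a \<in> verts p q" "b \<in> verts p q"
  shows "inner_v p q (\<lambda>i. ind a i - ind b i) v = v a - v b"
  using assms unfolding inner_v_def ind_def
  by (simp add: verts_def left_diff_distrib sum_subtractf if_distrib[of "\<lambda>x. x * _"] cong: if_cong)

lemma EK_perp_iff_const_on_clique:
  assumes "q \<ge> 1"
  shows "v \<in> EK_perp p q \<longleftrightarrow>
    v \<in> vecs p q \<and> (\<forall>i. - int p + 1 \<le> i \<and> i \<le> -1 \<longrightarrow> v i = v (-1))"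
proof -
  have in_verts: "- int k \<in> verts p q" "-1 \<in> verts p q" if "k \<in> {2..p-1}" for k
    using that assms by (auto simp: verts_def)
  have EK_inner: "inner_v p q w v = (\<Sum>k\<in>{2..p-1}. c k * (v (-1) - v (- int k)))"
    if "w = (\<lambda>i. \<Sum>k\<in>{2..p-1}. c k * (ind (-1) i - ind (- int k) i))" for w c
  proof -
    have "inner_v p q w v =
        (\<Sum>k\<in>{2..p-1}. c k * inner_v p q (\<lambda>i. ind (-1) i - ind (- int k) i) v)"
      unfolding inner_v_def that
      by (simp add: sum_distrib_left sum_distrib_right mult.assoc sum.swap[of _ "verts p q"])
    then show ?thesis using inner_v_ind_diff in_verts by simp
  qed
  show ?thesis
  proof
    assume perp: "v \<in> EK_perp p q"
    have pair: "v (-1) = v (- int k)" if "k \<in> {2..p-1}" for k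
    proof -
      let ?c = "\<lambda>k'. if k' = k then 1 else 0 :: real"
      have "(\<lambda>i. \<Sum>k'\<in>{2..p-1}. ?c k' * (ind (-1) i - ind (- int k') i)) \<in> EK p"
        unfolding EK_def by (intro CollectI exI[of _ ?c]) (rule refl)
      then have "(\<Sum>k'\<in>{2..p-1}. ?c k' * (v (-1) - v (- int k'))) = 0"
        using perp EK_inner by (auto simp: EK_perp_def)
      then show ?thesis using that by (simp add: if_distrib[of "\<lambda>x. x * _"] cong: if_cong)
    qed
    have "v i = v (-1)" if "- int p + 1 \<le> i" "i \<le> -1" "i \<noteq> -1" for i
    proof -
      have "nat (- i) \<in> {2..p-1}" "- int (nat (- i)) = i" using that by auto
      then show ?thesis using pair by metis
    qed
    then show "v \<in> vecs p q \<and> (\<forall>i. - int p + 1 \<le> i \<and> i \<le> -1 \<longrightarrow> v i = v (-1))"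
      using perp by (auto simp: EK_perp_def)
  next
    assume const: "v \<in> vecs p q \<and> (\<forall>i. - int p + 1 \<le> i \<and> i \<le> -1 \<longrightarrow> v i = v (-1))"
    have "v (- int k) = v (-1)" if "k \<in> {2..p-1}" for k
    proof -
      have "- int p + 1 \<le> - int k" "- int k \<le> -1" using that by auto
      then show ?thesis using const by blast
    qed
    then have "(\<Sum>k\<in>{2..p-1}. c k * (v (-1) - v (- int k))) = 0" for c
      by (intro sum.neutral) simp
    then show "v \<in> EK_perp p q"
      unfolding EK_perp_def EK_def using EK_inner const by auto
  qed
qed

lemma vecs_eq_zeroI:
  assumes "v \<in> vecs p q"
    and "\<forall>i. - int p + 1 \<le> i \<and> i \<le> -1 \<longrightarrow> v i = 0"
    and "\<And>j. j \<le> q - 1 \<Longrightarrow> v (int j) = 0"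
  shows "v = (\<lambda>_. 0)"
proof
  fix i
  consider "i \<notin> verts p q" | "- int p + 1 \<le> i \<and> i \<le> -1" | "0 \<le> i \<and> nat i \<le> q - 1"
    by (force simp: verts_def)
  then show "v i = 0"
  proof cases
    case 3
    then show ?thesis using assms(3)[of "nat i"] by simp
  qed (use assms in \<open>auto simp: vecs_def\<close>)
qed

section \<open>Three-term recurrences\<close>

lemma recurrence_wronskian:
  fixes x y :: "nat \<Rightarrow> real"
  assumes rx: "\<And>j. 1 \<le> j \<Longrightarrow> j \<le> n - 1 \<Longrightarrow> x (j - 1) + x (j + 1) = c * x j"
    and ry: "\<And>j. 1 \<le> j \<Longrightarrow> j \<le> n - 1 \<Longrightarrow> y (j - 1) + y (j + 1) = c * y j"
    and ex: "x (n - 1) = d * x n" and ey: "y (n - 1) = d * y n"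
    and n: "n \<ge> 1"
  shows "x 0 * y 1 = x 1 * y 0"
proof -
  define W where "W j = x j * y (j + 1) - x (j + 1) * y j" for j
  have "W (n - 1 - k) = 0" if "k \<le> n - 1" for k
    using that
  proof (induction k)
    case 0
    show ?case using n ex ey by (simp add: W_def)
  next
    case (Suc k)
    define j where "j = n - 1 - k"
    have j: "1 \<le> j" "j \<le> n - 1" "n - 1 - Suc k = j - 1" "j - 1 + 1 = j"
      using Suc.prems unfolding j_def by auto
    have xr: "x (j - 1) = c * x j - x (j + 1)" and yr: "y (j - 1) = c * y j - y (j + 1)"
      using rx[OF j(1,2)] ry[OF j(1,2)] by simp_all
    have "W (j - 1) = x (j - 1) * y j - x j * y (j - 1)" unfolding W_def j(4) ..
    also have "\<dots> = W j" unfolding xr yr W_def by (simp add: algebra_simps)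
    finally show ?case using Suc unfolding j_def j(3) by simp
  qed
  from this[of "n - 1"] show ?thesis by (simp add: W_def)
qed

lemma recurrence_zero_start:
  fixes x :: "nat \<Rightarrow> real"
  assumes x0: "x 0 = 0" and x1: "x 1 = 0"
    and rec: "\<And>j. 1 \<le> j \<Longrightarrow> j \<le> n - 1 \<Longrightarrow> x (j - 1) + x (j + 1) = c * x j"
  shows "j \<le> n \<Longrightarrow> x j = 0"
proof (induction j rule: less_induct)
  case (less j)
  consider "j = 0" | "j = 1" | m where "j = m + 2"
    by (cases j; cases "j - 1") auto
  then show ?case
  proof cases
    case 3
    then have "x m + x (m + 2) = c * x (m + 1)" using rec[of "m + 1"] less.prems by simp
    then show ?thesis using less 3 by simp
  qed (use x0 x1 in simp_all)
qed

fun cfrac :: "real \<Rightarrow> nat \<Rightarrow> real" where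
  "cfrac c 0 = 1"
| "cfrac c (Suc k) = 1 / (c - cfrac c k)"

lemma cfrac_bounds:
  assumes "c < -2"
  shows "-1 < cfrac c k \<and> (0 < k \<longrightarrow> cfrac c k < 0)"
proof (induction k)
  case (Suc k)
  then have "c - cfrac c k < -1" using assms by simp
  then show ?case by (simp add: field_simps)
qed simp

lemma cfrac_antimono:
  assumes "c2 \<le> c1" "c1 < -2"
  shows "cfrac c1 k \<le> cfrac c2 k"
proof (induction k)
  case (Suc k)
  have "c1 - cfrac c1 k < -1" using cfrac_bounds[OF assms(2), of k] assms by simp
  moreover have "c2 - cfrac c2 k \<le> c1 - cfrac c1 k" using Suc assms by simp
  ultimately show ?case by (simp add: field_simps)
qed simp

lemma recurrence_ratio_cfrac:
  fixes x :: "nat \<Rightarrow> real"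
  assumes nz: "\<And>j. j \<le> n \<Longrightarrow> x j \<noteq> 0" and last: "x (n + 1) = x n"
    and rec: "\<And>j. 1 \<le> j \<Longrightarrow> j \<le> n \<Longrightarrow> x (j - 1) + x (j + 1) = c * x j"
  shows "k \<le> n \<Longrightarrow> x (n + 1 - k) / x (n - k) = cfrac c k"
proof (induction k)
  case 0
  show ?case using last nz[of n] by simp
next
  case (Suc k)
  define j where "j = n - k"
  have j: "1 \<le> j" "j \<le> n" "n + 1 - Suc k = j" "n - Suc k = j - 1" "n + 1 - k = j + 1"
    using Suc.prems unfolding j_def by auto
  have IH: "x (j + 1) = cfrac c k * x j"
    using Suc nz[OF j(2)] j(5) unfolding j_def by (simp add: field_simps)
  have "x (j - 1) = x j * (c - cfrac c k)"
    using rec[OF j(1,2)] unfolding IH by (simp add: algebra_simps)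
  then show ?case unfolding j(3,4) using nz[OF j(2)] by simp
qed

section \<open>The root \<open>\<sigma>\<^sub>+\<close> and the path solution\<close>

lemma sigma_plus_root:
  assumes "4 < l"
  shows "sigma_plus l ^ 2 + 1 = (2 - l) * sigma_plus l"
proof -
  have "2\<^sup>2 \<le> (l - 2)\<^sup>2" using assms by (intro power_mono) auto
  then have "(sqrt ((2 - l)\<^sup>2 - 4))\<^sup>2 = (2 - l)\<^sup>2 - 4"
    by (simp add: power2_commute[of l])
  then show ?thesis
    unfolding sigma_plus_def by (simp add: power2_eq_square field_simps)
qed

lemma sigma_plus_bounds:
  assumes "4 < l"
  shows "-1 < sigma_plus l" and "sigma_plus l < 0"
proof -
  have "sqrt ((2 - l)\<^sup>2 - 4) < sqrt ((2 - l)\<^sup>2)"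
    by (rule real_sqrt_less_mono) simp
  then have "sqrt ((2 - l)\<^sup>2 - 4) < l - 2" using assms by simp
  then show "sigma_plus l < 0" unfolding sigma_plus_def by simp
  have "(l - 4)\<^sup>2 < (2 - l)\<^sup>2 - 4" using assms by (simp add: power2_eq_square algebra_simps)
  then have "l - 4 < sqrt ((2 - l)\<^sup>2 - 4)" by (rule real_less_rsqrt)
  then show "-1 < sigma_plus l" unfolding sigma_plus_def by simp
qed

text \<open>With \<open>N = 2q - 1\<close> the symmetry \<open>j \<mapsto> N - j\<close> gives \<open>G q = G (q - 1)\<close>, which turns the
  recurrence at \<open>j = q - 1\<close> into the end condition \<open>G (q - 2) = (1 - \<lambda>) G (q - 1)\<close>.\<close>

definition mirror_pow :: "real \<Rightarrow> nat \<Rightarrow> nat \<Rightarrow> real" where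
  "mirror_pow s N j = s ^ j + s ^ (N - j)"

lemma mirror_pow_recurrence:
  assumes root: "s\<^sup>2 + 1 = c * s" and j: "1 \<le> j" "j + 1 \<le> N"
  shows "mirror_pow s N (j - 1) + mirror_pow s N (j + 1) = c * mirror_pow s N j"
proof -
  have pow: "s ^ k + s ^ (k + 2) = c * s ^ (k + 1)" for k
  proof -
    have "s ^ k + s ^ (k + 2) = s ^ k * (s\<^sup>2 + 1)"
      by (simp add: power_add power2_eq_square algebra_simps)
    also have "\<dots> = c * s ^ (k + 1)" unfolding root by (simp add: algebra_simps)
    finally show ?thesis .
  qed
  have "j - 1 + 2 = j + 1" "j - 1 + 1 = j" "N - (j - 1) = (N - j - 1) + 2"
    "N - (j + 1) = N - j - 1" "N - j - 1 + 1 = N - j" using j by auto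
  then show ?thesis
    using pow[of "j - 1"] pow[of "N - j - 1"] unfolding mirror_pow_def by (simp add: algebra_simps)
qed

lemma mirror_pow_reflect: "j \<le> N \<Longrightarrow> mirror_pow s N (N - j) = mirror_pow s N j"
  unfolding mirror_pow_def by simp

lemma mirror_pow_0_pos:
  assumes "\<bar>s\<bar> < 1" "0 < N"
  shows "0 < mirror_pow s N 0"
proof -
  have "\<bar>s ^ N\<bar> < 1" using assms by (simp add: power_abs power_less_one_iff)
  then show ?thesis unfolding mirror_pow_def by simp
qed

lemma mirror_pow_nonzero:
  assumes s: "\<bar>s\<bar> < 1" "s \<noteq> 0" and N: "odd N" and j: "j \<le> N"
  shows "mirror_pow s N j \<noteq> 0"
proof -
  have lower_half: "mirror_pow s N i \<noteq> 0" if "2 * i < N" for i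
  proof -
    have "mirror_pow s N i = s ^ i * mirror_pow s (N - 2 * i) 0"
      using that unfolding mirror_pow_def
      by (simp add: algebra_simps flip: power_add)
    then show ?thesis using mirror_pow_0_pos[OF s(1), of "N - 2 * i"] s(2) that by simp
  qed
  show ?thesis
  proof (cases "2 * j < N")
    case False
    then have "2 * (N - j) < N" using N j by presburger
    then show ?thesis using lower_half mirror_pow_reflect[OF j] by metis
  qed (rule lower_half)
qed

lemma Fq_eq_mirror_pow_ratio:
  assumes "q \<ge> 2"
  shows "Fq p q l =
    (1 - l) * (mirror_pow (sigma_plus l) (2*q - 1) 1 / mirror_pow (sigma_plus l) (2*q - 1) 0)
    - (real p - l) * (1 - l) + (real p - 1)"
proof -
  let ?s = "sigma_plus l"
  have "2*q - 1 - 1 = Suc (2*q - 3)" using assms by linarith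
  then have "mirror_pow ?s (2*q - 1) 1 = ?s * (1 + ?s ^ (2*q - 3))"
    unfolding mirror_pow_def by (simp add: algebra_simps)
  moreover have "mirror_pow ?s (2*q - 1) 0 = 1 + ?s ^ (2*q - 1)"
    unfolding mirror_pow_def by simp
  ultimately show ?thesis unfolding Fq_def Let_def by (simp add: mult.assoc)
qed

lemma sigma_mirror_pow_path_solution:
  assumes l: "4 < l" and q: "q \<ge> 2"
  defines "G \<equiv> mirror_pow (sigma_plus l) (2*q - 1)"
  shows "\<And>j. 1 \<le> j \<Longrightarrow> j \<le> q - 1 \<Longrightarrow> G (j - 1) + G (j + 1) = (2 - l) * G j"
    and "G q = G (q - 1)"
    and "G (q - 2) = (1 - l) * G (q - 1)"
    and "\<And>j. j \<le> q - 1 \<Longrightarrow> G j \<noteq> 0"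
    and "0 < G 0"
proof -
  have s: "\<bar>sigma_plus l\<bar> < 1" "sigma_plus l \<noteq> 0" using sigma_plus_bounds[OF l] by auto
  show rec: "G (j - 1) + G (j + 1) = (2 - l) * G j" if "1 \<le> j" "j \<le> q - 1" for j
    unfolding G_def using that by (intro mirror_pow_recurrence sigma_plus_root l) auto
  show reflect: "G q = G (q - 1)"
    unfolding G_def using q mirror_pow_reflect[of "q - 1" "2*q - 1"] by simp
  have "q - 1 - 1 = q - 2" "q - 1 + 1 = q" using q by auto
  then show "G (q - 2) = (1 - l) * G (q - 1)"
    using rec[of "q - 1"] reflect q by (simp add: algebra_simps)
  show "G j \<noteq> 0" if "j \<le> q - 1" for j
    unfolding G_def using that q by (intro mirror_pow_nonzero s) auto
  show "0 < G 0"
    unfolding G_def using q s by (intro mirror_pow_0_pos) auto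
qed

lemma Fq_eq_cfrac:
  assumes l: "4 < l" and q: "q \<ge> 2"
  shows "Fq p q l = (l - 1) * (real p - l - cfrac (2 - l) (q - 1)) + (real p - 1)"
proof -
  define G where "G = mirror_pow (sigma_plus l) (2*q - 1)"
  note G = sigma_mirror_pow_path_solution[OF l q, folded G_def]
  have "G (q - 1 + 1 - (q - 1)) / G (q - 1 - (q - 1)) = cfrac (2 - l) (q - 1)"
    by (rule recurrence_ratio_cfrac) (use G q in simp_all)
  then have ratio: "G 1 / G 0 = cfrac (2 - l) (q - 1)" using q by simp
  show ?thesis
    unfolding Fq_eq_mirror_pow_ratio[OF q] G_def[symmetric] ratio by (simp add: algebra_simps)
qed

section \<open>Eigenvectors in \<open>E\<^sub>K\<^sup>\<bottom>\<close> and roots of \<open>F\<^sub>q\<close>\<close>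

lemma eigenvector_imp_Fq_zero:
  assumes p: "p \<ge> 3" and q: "q \<ge> 3" and l: "4 < lam"
    and v: "v \<in> EK_perp p q" "v \<noteq> (\<lambda>_. 0)" "lap_apply p q v = (\<lambda>i. lam * v i)"
  shows "Fq p q lam = 0"
proof -
  define a where "a = v (-1)"
  define x where "x j = v (int j)" for j
  define G where "G = mirror_pow (sigma_plus lam) (2*q - 1)"
  have q1: "q \<ge> 1" and q2: "q \<ge> 2" using q by simp_all
  note G = sigma_mirror_pow_path_solution[OF l q2, folded G_def]
  have "v \<in> vecs p q \<and> (\<forall>i. - int p + 1 \<le> i \<and> i \<le> -1 \<longrightarrow> v i = v (-1))"
    using v(1) EK_perp_iff_const_on_clique[OF q1] by blast
  then have vecs: "v \<in> vecs p q"
    and const: "\<forall>i. - int p + 1 \<le> i \<and> i \<le> -1 \<longrightarrow> v i = a"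
    unfolding a_def by blast+
  have "v 0 = (1 - lam) * a \<and> v 1 = ((real p - lam) * (1 - lam) - (real p - 1)) * a \<and>
     (\<forall>j. 1 \<le> j \<and> j \<le> q - 2 \<longrightarrow>
        v (int (j - 1)) + v (int (j + 1)) = (2 - lam) * v (int j)) \<and>
     v (int (q - 2)) = (1 - lam) * v (int (q - 1))"
    using v(3) eigenvector_iff_vertex_equations[OF p q vecs const] by blast
  then have x0: "x 0 = (1 - lam) * a"
    and x1: "x 1 = ((real p - lam) * (1 - lam) - (real p - 1)) * a"
    and xrec: "\<And>j. 1 \<le> j \<Longrightarrow> j \<le> q - 2 \<Longrightarrow> x (j - 1) + x (j + 1) = (2 - lam) * x j"
    and xlast: "x (q - 2) = (1 - lam) * x (q - 1)"
    unfolding x_def by simp_all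
  have W: "x 0 * G 1 = x 1 * G 0"
    by (rule recurrence_wronskian[where n = "q - 1" and c = "2 - lam" and d = "1 - lam"])
      (use q xrec xlast G in \<open>simp_all add: numeral_2_eq_2\<close>)
  have FG: "G 0 * Fq p q lam =
      (1 - lam) * G 1 - ((real p - lam) * (1 - lam) - (real p - 1)) * G 0"
    using Fq_eq_mirror_pow_ratio[of q p lam] q G(5) unfolding G_def[symmetric]
    by (simp add: field_simps)
  have "a * (G 0 * Fq p q lam) = x 0 * G 1 - x 1 * G 0"
    unfolding FG x0 x1 by (simp add: algebra_simps)
  then have "a * (G 0 * Fq p q lam) = 0" using W by simp
  moreover have "a \<noteq> 0"
  proof
    assume "a = 0"
    then have "x j = 0" if "j \<le> q - 1" for j
      using recurrence_zero_start[of x "q - 1" "2 - lam" j] x0 x1 xrec that by simp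
    then have "v = (\<lambda>_. 0)"
      using vecs const \<open>a = 0\<close> by (intro vecs_eq_zeroI) (auto simp: x_def)
    then show False using v(2) by contradiction
  qed
  ultimately show ?thesis using G(5) by simp
qed

lemma Fq_zero_imp_eigenvector:
  assumes p: "p \<ge> 3" and q: "q \<ge> 3" and l: "4 < lam" and F: "Fq p q lam = 0"
  shows "\<exists>v \<in> EK_perp p q. v \<noteq> (\<lambda>_. 0) \<and> lap_apply p q v = (\<lambda>i. lam * v i)"
proof -
  define G where "G = mirror_pow (sigma_plus lam) (2*q - 1)"
  have q1: "q \<ge> 1" and q2: "q \<ge> 2" using q by simp_all
  note G = sigma_mirror_pow_path_solution[OF l q2, folded G_def]
  define v where "v i = (if - int p + 1 \<le> i \<and> i \<le> -1 then G 0
      else if 0 \<le> i \<and> i \<le> int q - 1 then (1 - lam) * G (nat i) else 0)" for i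
  have vecs: "v \<in> vecs p q" unfolding vecs_def verts_def v_def using p by auto
  have const: "\<forall>i. - int p + 1 \<le> i \<and> i \<le> -1 \<longrightarrow> v i = G 0" by (simp add: v_def)
  have path: "v (int j) = (1 - lam) * G j" if "j \<le> q - 1" for j
  proof -
    have "int j \<le> int q - 1" using that q by linarith
    then show ?thesis by (simp add: v_def)
  qed
  have "v (-1) = G 0" using const p by simp
  then have "v \<in> EK_perp p q"
    unfolding EK_perp_iff_const_on_clique[OF q1] using vecs const by simp
  moreover have "v \<noteq> (\<lambda>_. 0)"
  proof
    assume "v = (\<lambda>_. 0)"
    then show False using \<open>v (-1) = G 0\<close> G(5) by simp
  qed
  moreover have "lap_apply p q v = (\<lambda>i. lam * v i)"
    unfolding eigenvector_iff_vertex_equations[OF p q vecs const]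
  proof (intro conjI allI impI)
    show "v 0 = (1 - lam) * G 0" using path[of 0] by simp
    have "(1 - lam) * G 1 = ((real p - lam) * (1 - lam) - (real p - 1)) * G 0"
      using F Fq_eq_mirror_pow_ratio[of q p lam] G(5) q unfolding G_def[symmetric]
      by (simp add: field_simps)
    then show "v 1 = ((real p - lam) * (1 - lam) - (real p - 1)) * G 0"
      using path[of 1] q by simp
    show "v (int (j - 1)) + v (int (j + 1)) = (2 - lam) * v (int j)"
      if "1 \<le> j \<and> j \<le> q - 2" for j
    proof -
      have j: "j - 1 \<le> q - 1" "j \<le> q - 1" "j + 1 \<le> q - 1" using that by auto
      have "v (int (j - 1)) + v (int (j + 1)) = (1 - lam) * (G (j - 1) + G (j + 1))"
        unfolding path[OF j(1)] path[OF j(3)] by (simp add: distrib_left)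
      also have "\<dots> = (2 - lam) * v (int j)"
        unfolding path[OF j(2)] using G(1)[of j] that j(2) by simp
      finally show ?thesis .
    qed
    show "v (int (q - 2)) = (1 - lam) * v (int (q - 1))"
      using path[of "q - 2"] path[of "q - 1"] G(3) by simp
  qed
  ultimately show ?thesis by blast
qed

lemma continuous_on_Fq:
  assumes "q \<ge> 1"
  shows "continuous_on {4<..} (Fq p q)"
proof -
  have "continuous_on {4<..} sigma_plus"
    unfolding sigma_plus_def by (intro continuous_intros) auto
  moreover have "1 + sigma_plus l ^ (2*q - 1) \<noteq> 0" if "l \<in> {4<..}" for l
    using mirror_pow_0_pos[of "sigma_plus l" "2*q - 1"] sigma_plus_bounds[of l] that assms
    unfolding mirror_pow_def by auto
  ultimately show ?thesis
    unfolding Fq_def Let_def by (intro continuous_intros) auto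
qed

lemma Fq_pos:
  assumes q: "q \<ge> 2" and l: "4 < l" "l \<le> real p"
  shows "0 < Fq p q l"
proof -
  have "cfrac (2 - l) (q - 1) < 0" using cfrac_bounds[of "2 - l" "q - 1"] l q by simp
  then have "0 < (l - 1) * (real p - l - cfrac (2 - l) (q - 1))" using l by simp
  then show ?thesis unfolding Fq_eq_cfrac[OF l(1) q] using l by simp
qed

lemma Fq_neg:
  assumes q: "q \<ge> 2" and l: "4 < l" "real p + 2 \<le> l"
  shows "Fq p q l < 0"
proof -
  have "-1 < cfrac (2 - l) (q - 1)" using cfrac_bounds[of "2 - l" "q - 1"] l by simp
  then have "(l - 1) * (real p - l - cfrac (2 - l) (q - 1)) < (l - 1) * (-1)"
    using l by (intro mult_strict_left_mono) auto
  then show ?thesis unfolding Fq_eq_cfrac[OF l(1) q] using l by simp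
qed

lemma Fq_strict_antimono:
  assumes q: "q \<ge> 2" and p: "p \<ge> 2"
    and l: "4 < l1" "real p < l1" "l1 < l2" "l2 \<le> real p + 2"
  shows "Fq p q l2 < Fq p q l1"
proof -
  define R1 where "R1 = cfrac (2 - l1) (q - 1)"
  define R2 where "R2 = cfrac (2 - l2) (q - 1)"
  have R1: "-1 < R1" using cfrac_bounds[of "2 - l1" "q - 1"] l unfolding R1_def by simp
  have "R1 \<le> R2" unfolding R1_def R2_def using l by (intro cfrac_antimono) auto
  then have "(l2 - 1) * (- R2) \<le> (l2 - 1) * (- R1)" using l by (intro mult_left_mono) auto
  moreover have "(l2 - l1) * (- R1) < (l2 - l1) * 1"
    using R1 l by (intro mult_strict_left_mono) auto
  moreover have "(l2 - l1) * (real p + 1 - l1 - l2) < (l2 - l1) * (1 - real p)"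
    using l by (intro mult_strict_left_mono) auto
  moreover have "(l2 - l1) * (2 - real p) \<le> 0" using l p by (intro mult_nonneg_nonpos) auto
  moreover have "Fq p q l2 - Fq p q l1 = (l2 - 1) * (- R2) - (l2 - 1) * (- R1)
      + (l2 - l1) * (- R1) + (l2 - l1) * (real p + 1 - l1 - l2)"
    using Fq_eq_cfrac[OF l(1) q, of p] Fq_eq_cfrac[of l2 q p] l q
    unfolding R1_def R2_def by (simp add: algebra_simps)
  ultimately show ?thesis by (simp add: algebra_simps)
qed

lemma Fq_unique_root:
  assumes p: "p \<ge> 5" and q: "q \<ge> 2"
  shows "\<exists>!l. real p < l \<and> l \<le> real p + 2 \<and> Fq p q l = 0"
proof (rule ex_ex1I)
  have "Fq p q (real p + 2) < 0" using Fq_neg[OF q] p by simp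
  moreover have "0 < Fq p q (real p)" using Fq_pos[OF q] p by simp
  moreover have "continuous_on {4<..} (Fq p q)" using continuous_on_Fq q by simp
  then have "continuous_on {real p .. real p + 2} (Fq p q)"
    by (rule continuous_on_subset) (use p in auto)
  ultimately obtain l where "real p \<le> l" "l \<le> real p + 2" "Fq p q l = 0"
    using IVT2'[of "Fq p q" "real p + 2" 0 "real p"] by auto
  moreover have "l \<noteq> real p" using \<open>0 < Fq p q (real p)\<close> \<open>Fq p q l = 0\<close> by auto
  ultimately show "\<exists>l. real p < l \<and> l \<le> real p + 2 \<and> Fq p q l = 0"
    by (intro exI[of _ l]) simp
next
  fix l1 l2
  assume "real p < l1 \<and> l1 \<le> real p + 2 \<and> Fq p q l1 = 0"
    and "real p < l2 \<and> l2 \<le> real p + 2 \<and> Fq p q l2 = 0"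
  then show "l1 = l2"
    using Fq_strict_antimono[OF q, of p l1 l2] Fq_strict_antimono[OF q, of p l2 l1] p
    by (cases l1 l2 rule: linorder_cases) auto
qed

theorem proposition7:
  fixes p q :: nat
  assumes "p \<ge> 6" and "q \<ge> 3"
  shows "(\<forall>lam::real. lam > 4 \<longrightarrow>
            ((\<exists>v \<in> EK_perp p q. v \<noteq> (\<lambda>_. 0) \<and> lap_apply p q v = (\<lambda>i. lam * v i))
             \<longleftrightarrow> Fq p q lam = 0))
       \<and> (\<exists>!lam::real. real p < lam \<and> lam \<le> real p + 2 \<and> Fq p q lam = 0)
       \<and> (\<forall>lam::real. ((4 < lam \<and> lam \<le> real p) \<or> lam > real p + 2) \<longrightarrow> Fq p q lam \<noteq> 0)"
proof (intro conjI allI impI)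
  have p: "p \<ge> 3" using assms by simp
  fix lam :: real
  assume "lam > 4"
  then show "(\<exists>v \<in> EK_perp p q. v \<noteq> (\<lambda>_. 0) \<and> lap_apply p q v = (\<lambda>i. lam * v i))
             \<longleftrightarrow> Fq p q lam = 0"
    using eigenvector_imp_Fq_zero[OF p assms(2)] Fq_zero_imp_eigenvector[OF p assms(2)] by blast
next
  show "\<exists>!lam::real. real p < lam \<and> lam \<le> real p + 2 \<and> Fq p q lam = 0"
    using Fq_unique_root assms by simp
next
  fix lam :: real
  assume "(4 < lam \<and> lam \<le> real p) \<or> lam > real p + 2"
  then show "Fq p q lam \<noteq> 0"
  proof
    assume "4 < lam \<and> lam \<le> real p"
    then show ?thesis using Fq_pos[of q lam p] assms by simp
  next
    assume "lam > real p + 2"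
    then show ?thesis using Fq_neg[of q lam p] assms by simp
  qed
qed

end
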